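(* Let $\alpha\in\mathbb{R}$, $\gamma,\sigma>0$. Let $p_Y$ be the density on $[0,\infty)$ \[ p_Y(y)=\frac{1}{\Phi\!\left(\frac{\alpha}{\sqrt{\sigma^2\gamma/2}}\right)\sqrt{\pi\sigma^2/\gamma}}\exp\!\left(-\frac{\gamma}{\sigma^2}\Big(y-\frac{\alpha}{\gamma}\Big)^2\right),\quad y\ge 0, \] ($\Phi$ the standard normal distribution function), let $F_Y$ be its distribution function and $\bar F_Y=1-F_Y$. Let $q_L:=\frac{\sigma^2}{2}p_Y(0)$, $W(v):=\exp\left(\frac{2\alpha v}{\sigma^2}-\frac{\gamma v^2}{\sigma^2}\right)$, and let \[ h(x)=\int_{0}^{x}\frac{1}{W(u)}\left(1-\frac{2q_L}{\sigma^{2}}\int_0^u W(v)\,\mathrm{d}v\right)\mathrm{d}u, \] i.e. the unique solution of $(\alpha-\gamma x)h'(x)+\frac{\sigma^2}{2}h''(x)=-q_L$ for $x\ge0$ with $h(0)=0$, $h'(0)=1$. Then for $x>0$, $h'(x)=\frac{p_Y(0)}{p_Y(x)}\bar F_Y(x)$. Moreover, $\int_0^\infty h'(x)^2p_Y(x)\,\mathrm{d}x<\infty$.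
   Context: $p_Y$ is the invariant (truncated normal) density of the Ornstein–Uhlenbeck process $\mathrm{d}Y_t=(\alpha-\gamma Y_t)\mathrm{d}t+\sigma\mathrm{d}W_t$ reflected at $0$ from below. *)

theory Defs
  imports "HOL-Probability.Probability"
begin

definition Phi :: "real \<Rightarrow> real" where
  "Phi x = (LBINT t:{..x}. std_normal_density t)"

definition pY :: "real \<Rightarrow> real \<Rightarrow> real \<Rightarrow> real \<Rightarrow> real" where
  "pY \<alpha> \<gamma> \<sigma> y =
     1 / (Phi (\<alpha> / sqrt (\<sigma>\<^sup>2 * \<gamma> / 2)) * sqrt (pi * \<sigma>\<^sup>2 / \<gamma>))
     * exp (- (\<gamma> / \<sigma>\<^sup>2) * (y - \<alpha> / \<gamma>)\<^sup>2)"

definition FY :: "real \<Rightarrow> real \<Rightarrow> real \<Rightarrow> real \<Rightarrow> real" where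
  "FY \<alpha> \<gamma> \<sigma> x = (LBINT y:{0..x}. pY \<alpha> \<gamma> \<sigma> y)"

definition FbarY :: "real \<Rightarrow> real \<Rightarrow> real \<Rightarrow> real \<Rightarrow> real" where
  "FbarY \<alpha> \<gamma> \<sigma> x = 1 - FY \<alpha> \<gamma> \<sigma> x"

definition qL :: "real \<Rightarrow> real \<Rightarrow> real \<Rightarrow> real" where
  "qL \<alpha> \<gamma> \<sigma> = \<sigma>\<^sup>2 / 2 * pY \<alpha> \<gamma> \<sigma> 0"

definition Wf :: "real \<Rightarrow> real \<Rightarrow> real \<Rightarrow> real \<Rightarrow> real" where
  "Wf \<alpha> \<gamma> \<sigma> v = exp (2 * \<alpha> * v / \<sigma>\<^sup>2 - \<gamma> * v\<^sup>2 / \<sigma>\<^sup>2)"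

definition hf :: "real \<Rightarrow> real \<Rightarrow> real \<Rightarrow> real \<Rightarrow> real" where
  "hf \<alpha> \<gamma> \<sigma> x =
     (LBINT u=0..x. (1 / Wf \<alpha> \<gamma> \<sigma> u) *
        (1 - 2 * qL \<alpha> \<gamma> \<sigma> / \<sigma>\<^sup>2 * (LBINT v=0..u. Wf \<alpha> \<gamma> \<sigma> v)))"

end

theory Submission
  imports Defs
begin

text \<open>
  Since \<open>W(0) = 1\<close>, the density is \<open>p\<^sub>Y = p\<^sub>Y(0) W\<close> and \<open>2 q\<^sub>L / \<sigma>\<^sup>2 = p\<^sub>Y(0)\<close>, so the
  bracket in the definition of \<open>h\<close> is \<open>1 - F\<^sub>Y(u) = Fbar\<^sub>Y(u)\<close> and the fundamental theorem of
  calculus gives \<open>h' = Fbar\<^sub>Y / W = p\<^sub>Y(0) Fbar\<^sub>Y / p\<^sub>Y\<close>. For \<open>v \<ge> u \<ge> x\<^sub>0 = max 0 ((2\<alpha> + \<sigma>\<^sup>2) / (2\<gamma>))\<close>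
  the Gaussian satisfies \<open>W(v) \<le> W(u) exp(u - v)\<close>, whence \<open>Fbar\<^sub>Y(x) \<le> p\<^sub>Y(x)\<close> beyond \<open>x\<^sub>0\<close>.
  Therefore \<open>h'\<^sup>2 p\<^sub>Y = p\<^sub>Y(0) Fbar\<^sub>Y\<^sup>2 / W\<close> is bounded on \<open>[0, x\<^sub>0]\<close> and at most \<open>p\<^sub>Y(0)\<^sup>3 W\<close> after it,
  in both cases a multiple of \<open>exp(-x)\<close>.
\<close>

lemma Phi_pos: "Phi c > 0"
proof -
  have int: "integrable lborel (\<lambda>x. indicator {..c} x *\<^sub>R std_normal_density x)"
    by (rule integrable_mult_indicator) auto
  have "Phi c \<noteq> 0"
  proof
    assume "Phi c = 0"
    then have "AE x in lborel. indicator {..c} x *\<^sub>R std_normal_density x = 0"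
      using integral_nonneg_eq_0_iff_AE[OF int] unfolding Phi_def set_lebesgue_integral_def
      by (auto simp: indicator_def)
    then have "AE x in lborel. x \<notin> {..c}"
      using normal_density_pos[of 1 0] by (rule_tac AE_mp) (auto intro!: AE_I2 simp: indicator_def, metis less_irrefl)
    then have "emeasure lborel {..c} = 0"
      by (subst (asm) AE_iff_measurable[where N="{..c}"]) auto
    moreover have "emeasure lborel {c-1..c} \<le> emeasure lborel {..c}"
      by (rule emeasure_mono) auto
    ultimately show False by simp
  qed
  moreover have "0 \<le> Phi c" unfolding Phi_def set_lebesgue_integral_def
    by (rule Bochner_Integration.integral_nonneg) (auto simp: indicator_def)
  ultimately show ?thesis by simp
qed

lemma set_integral_normal_density_atLeast_0:
  assumes t: "t > 0"
  shows "(LINT y:{0..}|lborel. normal_density m t y) = Phi (m / t)"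
proof -
  have "(LINT y:{0..}|lborel. normal_density m t y)
      = (\<integral>y. indicator {0..} y * normal_density m t y \<partial>lborel)"
    by (simp add: set_lebesgue_integral_def)
  also have "\<dots> = \<bar>-t\<bar> *\<^sub>R (\<integral>x. indicator {0..} (m + -t * x) * normal_density m t (m + -t * x) \<partial>lborel)"
    by (rule lborel_integral_real_affine) (use t in auto)
  also have "\<dots> = t * (\<integral>x. indicator {..m/t} x * (std_normal_density x / t) \<partial>lborel)"
  proof -
    have "indicator {0..} (m + -t * x) * normal_density m t (m + -t * x)
        = indicator {..m/t} x * (std_normal_density x / t)" for x
    proof -
      have "indicator {0..} (m + -t * x) = (indicator {..m/t} x :: real)"
        using t by (simp add: indicator_def field_simps)
      moreover have "normal_density m t (m + -t * x) = std_normal_density x / t"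
        using t by (simp add: normal_density_def real_sqrt_mult power_mult_distrib field_simps)
      ultimately show ?thesis by simp
    qed
    then show ?thesis using t by simp
  qed
  also have "\<dots> = Phi (m / t)"
    using t by (simp add: Phi_def set_lebesgue_integral_def mult.assoc)
  finally show ?thesis .
qed

lemma has_real_derivative_interval_integral_0:
  fixes f :: "real \<Rightarrow> real"
  assumes "continuous_on UNIV f"
  shows "((\<lambda>x. LBINT u=0..x. f u) has_real_derivative f x) (at x)"
proof -
  have "((\<lambda>x. LBINT u=ereal 0..x. f u) has_vector_derivative f x) (at x within {-\<bar>x\<bar>-1..\<bar>x\<bar>+1})"
    using assms by (intro interval_integral_FTC2) (auto intro: continuous_on_subset)
  moreover have "at x within {-\<bar>x\<bar>-1..\<bar>x\<bar>+1} = at x" by (rule at_within_Icc_at) auto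
  ultimately show ?thesis
    by (simp add: has_real_derivative_iff_has_vector_derivative zero_ereal_def)
qed

lemma nn_integral_atLeast_0_finite_if_exp_bounded:
  fixes f :: "real \<Rightarrow> real"
  assumes "0 \<le> B" and "\<And>x. 0 \<le> x \<Longrightarrow> f x \<le> B * exp (- x)"
  shows "(\<integral>\<^sup>+ x\<in>{0..}. ennreal (f x) \<partial>lborel) < \<infinity>"
proof -
  have "(\<integral>\<^sup>+ x\<in>{0..}. ennreal (f x) \<partial>lborel) \<le> (\<integral>\<^sup>+ x\<in>{0..}. ennreal (B * exp (-1 * x)) \<partial>lborel)"
    using assms(2) by (intro nn_integral_mono) (auto split: split_indicator intro!: ennreal_leI)
  also have "\<dots> = ennreal (B * (exp (-1 * 0) / 1))"
    using assms(1) has_integral_mult_right[OF has_integral_exp_minus_to_infinity[of 1 0], of B]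
    by (intro nn_integral_has_integral_lebesgue') auto
  finally show ?thesis
    using le_less_trans by fastforce
qed

lemma Wf_pos: "Wf \<alpha> \<gamma> \<sigma> v > 0"
  by (simp add: Wf_def)

locale reflected_OU =
  fixes \<alpha> \<gamma> \<sigma> :: real
  assumes \<gamma>_pos: "\<gamma> > 0" and \<sigma>_pos: "\<sigma> > 0"
begin

abbreviation W where "W \<equiv> Wf \<alpha> \<gamma> \<sigma>"
abbreviation p where "p \<equiv> pY \<alpha> \<gamma> \<sigma>"

lemma pY_eq_pY_0_Wf: "p y = p 0 * W y"
proof -
  have "-(\<gamma>/\<sigma>\<^sup>2)*(y-\<alpha>/\<gamma>)\<^sup>2 = -(\<gamma>/\<sigma>\<^sup>2)*(0-\<alpha>/\<gamma>)\<^sup>2 + (2*\<alpha>*y/\<sigma>\<^sup>2 - \<gamma>*y\<^sup>2/\<sigma>\<^sup>2)"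
    using \<gamma>_pos \<sigma>_pos by (simp add: field_simps power2_eq_square)
  then show ?thesis unfolding pY_def Wf_def by (simp add: exp_add[symmetric])
qed

lemma pY_eq_normal_density:
  "p y = normal_density (\<alpha>/\<gamma>) (sqrt (\<sigma>\<^sup>2/(2*\<gamma>))) y / Phi (\<alpha> / sqrt (\<sigma>\<^sup>2 * \<gamma> / 2))"
proof -
  have "-(y - \<alpha>/\<gamma>)\<^sup>2 / (2 * (sqrt (\<sigma>\<^sup>2/(2*\<gamma>)))\<^sup>2) = -(\<gamma>/\<sigma>\<^sup>2)*(y-\<alpha>/\<gamma>)\<^sup>2"
   and "2 * pi * (sqrt (\<sigma>\<^sup>2/(2*\<gamma>)))\<^sup>2 = pi * \<sigma>\<^sup>2 / \<gamma>"
    using \<gamma>_pos \<sigma>_pos by (simp_all add: field_simps)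
  then show ?thesis unfolding pY_def normal_density_def by simp
qed

lemma pY_pos: "p y > 0"
  using normal_density_pos[of "sqrt (\<sigma>\<^sup>2/(2*\<gamma>))"] Phi_pos \<gamma>_pos \<sigma>_pos
  by (simp add: pY_eq_normal_density)

lemma set_integrable_pY: "A \<in> sets lborel \<Longrightarrow> set_integrable lborel A p"
  unfolding set_integrable_def pY_eq_normal_density using \<gamma>_pos \<sigma>_pos
  by (intro integrable_mult_indicator integrable_divide integrable_normal_density) auto

lemma set_integral_pY_atLeast_0: "(LINT y:{0..}|lborel. p y) = 1"
proof -
  define t where "t = sqrt (\<sigma>\<^sup>2/(2*\<gamma>))"
  have t: "t > 0" using \<gamma>_pos \<sigma>_pos by (simp add: t_def)
  have "sqrt (\<sigma>\<^sup>2 * \<gamma> / 2) = sqrt (\<gamma>\<^sup>2 * t\<^sup>2)"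
    using \<gamma>_pos by (simp add: t_def power2_eq_square)
  also have "\<dots> = \<gamma> * t"
    using \<gamma>_pos t by (simp add: real_sqrt_mult)
  finally have "Phi (\<alpha> / \<gamma> / t) = Phi (\<alpha> / sqrt (\<sigma>\<^sup>2 * \<gamma> / 2))"
    by simp
  then show ?thesis
    using set_integral_normal_density_atLeast_0[OF t, of "\<alpha>/\<gamma>"] Phi_pos[of "\<alpha> / sqrt (\<sigma>\<^sup>2 * \<gamma> / 2)"]
    by (simp add: pY_eq_normal_density t_def[symmetric])
qed

lemma FbarY_eq_tail_integral:
  assumes "0 \<le> x"
  shows "FbarY \<alpha> \<gamma> \<sigma> x = (LINT y:{x<..}|lborel. p y)"
proof -
  have "{0..} = {0..x} \<union> {x<..}" using assms by auto
  then have "(LINT y:{0..}|lborel. p y) = (LINT y:{0..x}|lborel. p y) + (LINT y:{x<..}|lborel. p y)"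
    by (simp only:) (rule set_integral_Un, auto intro: set_integrable_pY)
  then show ?thesis
    using set_integral_pY_atLeast_0 unfolding FbarY_def FY_def by simp
qed

lemma FbarY_nonneg: "0 \<le> x \<Longrightarrow> 0 \<le> FbarY \<alpha> \<gamma> \<sigma> x"
  unfolding FbarY_eq_tail_integral set_lebesgue_integral_def
  using pY_pos by (intro Bochner_Integration.integral_nonneg) (auto simp: indicator_def less_imp_le)

lemma FbarY_le_1: "FbarY \<alpha> \<gamma> \<sigma> x \<le> 1"
proof -
  have "0 \<le> FY \<alpha> \<gamma> \<sigma> x"
    unfolding FY_def set_lebesgue_integral_def
    using pY_pos by (intro Bochner_Integration.integral_nonneg) (auto simp: indicator_def less_imp_le)
  then show ?thesis unfolding FbarY_def by simp
qed

lemma FbarY_eq_1_minus_integral_Wf: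
  assumes "0 \<le> x"
  shows "FbarY \<alpha> \<gamma> \<sigma> x = 1 - p 0 * (LBINT v=0..x. W v)"
proof -
  have "p = (\<lambda>y. p 0 * W y)"
    by (rule ext) (rule pY_eq_pY_0_Wf)
  then have "FY \<alpha> \<gamma> \<sigma> x = (LINT y:{0..x}|lborel. p 0 * W y)"
    unfolding FY_def by (rule arg_cong)
  also have "\<dots> = p 0 * (LBINT v=0..x. W v)"
    using interval_integral_Icc[of 0 x W] assms by (simp add: zero_ereal_def)
  finally show ?thesis unfolding FbarY_def by simp
qed

lemma hf_has_derivative:
  "(hf \<alpha> \<gamma> \<sigma> has_real_derivative (1 - p 0 * (LBINT v=0..x. W v)) / W x) (at x)"
proof -
  have W_cont: "continuous_on UNIV W"
    unfolding Wf_def using \<sigma>_pos by (intro continuous_intros) auto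
  have "continuous_on UNIV (\<lambda>u. (1 - p 0 * (LBINT v=0..u. W v)) / W u)"
    using DERIV_isCont[OF has_real_derivative_interval_integral_0[OF W_cont]] W_cont Wf_pos
    by (intro continuous_at_imp_continuous_on ballI continuous_intros)
       (auto simp: continuous_on_eq_continuous_at Wf_pos[THEN less_imp_neq, THEN not_sym])
  moreover have "2 * qL \<alpha> \<gamma> \<sigma> / \<sigma>\<^sup>2 = p 0"
    unfolding qL_def using \<sigma>_pos by simp
  ultimately show ?thesis
    using has_real_derivative_interval_integral_0 unfolding hf_def by simp
qed

lemma hf_has_derivative_FbarY:
  assumes "0 \<le> x"
  shows "(hf \<alpha> \<gamma> \<sigma> has_real_derivative p 0 / p x * FbarY \<alpha> \<gamma> \<sigma> x) (at x)"
proof -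
  have "p 0 / p x * FbarY \<alpha> \<gamma> \<sigma> x = (1 - p 0 * (LBINT v=0..x. W v)) / W x"
    using pY_pos[of 0] pY_eq_pY_0_Wf[of x] FbarY_eq_1_minus_integral_Wf[OF assms] by simp
  then show ?thesis using hf_has_derivative by simp
qed

definition x0 :: real where "x0 = max 0 ((2*\<alpha> + \<sigma>\<^sup>2) / (2*\<gamma>))"

lemma Wf_le_exp_decay:
  assumes "x0 \<le> u" and "u \<le> v"
  shows "W v \<le> W u * exp (-(v - u))"
proof -
  have "2*\<alpha> + \<sigma>\<^sup>2 \<le> 2*\<gamma>*u" using assms(1) \<gamma>_pos by (simp add: x0_def field_simps)
  moreover have "2*\<gamma>*u \<le> \<gamma>*(v + u)" using assms(2) \<gamma>_pos by simp
  ultimately have "(v - u) * (2*\<alpha> - \<gamma>*(v + u) + \<sigma>\<^sup>2) \<le> 0"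
    using assms(2) by (intro mult_nonneg_nonpos) auto
  then have "((v - u) * (2*\<alpha> - \<gamma>*(v + u) + \<sigma>\<^sup>2)) / \<sigma>\<^sup>2 \<le> 0"
    by (rule divide_nonpos_pos) (use \<sigma>_pos in auto)
  moreover have "((v - u) * (2*\<alpha> - \<gamma>*(v + u) + \<sigma>\<^sup>2)) / \<sigma>\<^sup>2 =
      (2*\<alpha> * v/\<sigma>\<^sup>2 - \<gamma> * v\<^sup>2/\<sigma>\<^sup>2) - ((2*\<alpha>*u/\<sigma>\<^sup>2 - \<gamma>*u\<^sup>2/\<sigma>\<^sup>2) + (u - v))"
    using \<sigma>_pos by (simp add: field_simps power2_eq_square)
  ultimately show ?thesis unfolding Wf_def by (simp add: exp_add[symmetric])
qed

lemma inverse_Wf_le: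
  assumes "0 \<le> x" and "x \<le> x0"
  shows "1 / W x \<le> exp ((2*\<bar>\<alpha>\<bar>*x0 + \<gamma>*x0\<^sup>2) / \<sigma>\<^sup>2)"
proof -
  have "\<gamma>*x\<^sup>2 \<le> \<gamma>*x0\<^sup>2" using assms \<gamma>_pos by (simp add: power_mono)
  moreover have "-(2*\<alpha>*x) \<le> 2*\<bar>\<alpha>\<bar>*x"
    using assms by (simp add: abs_if)
  moreover have "2*\<bar>\<alpha>\<bar>*x \<le> 2*\<bar>\<alpha>\<bar>*x0"
    using assms by (intro mult_left_mono) auto
  ultimately have "(\<gamma>*x\<^sup>2 - 2*\<alpha>*x) / \<sigma>\<^sup>2 \<le> (2*\<bar>\<alpha>\<bar>*x0 + \<gamma>*x0\<^sup>2) / \<sigma>\<^sup>2"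
    using \<sigma>_pos by (intro divide_right_mono) (linarith, simp)
  moreover have "1 / W x = exp ((\<gamma>*x\<^sup>2 - 2*\<alpha>*x) / \<sigma>\<^sup>2)"
    unfolding Wf_def by (simp add: exp_minus[symmetric] inverse_eq_divide[symmetric] diff_divide_distrib)
  ultimately show ?thesis by simp
qed

lemma FbarY_le_pY:
  assumes "x0 \<le> x"
  shows "FbarY \<alpha> \<gamma> \<sigma> x \<le> p x"
proof -
  have "0 \<le> x" using assms by (simp add: x0_def)
  have "((\<lambda>v. p x * exp x * exp (-1 * v)) has_integral p x * exp x * (exp (-1 * x) / 1)) {x..}"
    by (intro has_integral_mult_right has_integral_exp_minus_to_infinity) simp
  then have bound: "((\<lambda>v. p x * exp x * exp (-1 * v)) has_integral p x) {x<..}"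
    by (subst (asm) has_integral_spike_set_eq[of _ "{x<..}"])
       (auto intro: negligible_subset[of "{x}"] simp: exp_minus field_simps)
  have "integral {x<..} p \<le> p x"
  proof (rule has_integral_le[OF integrable_integral bound])
    show "p integrable_on {x<..}"
      using set_borel_integral_eq_integral(1)[OF set_integrable_pY] by simp
    fix y assume "y \<in> {x<..}"
    then have "W y \<le> W x * exp (-(y - x))"
      using assms by (intro Wf_le_exp_decay) auto
    then have "p 0 * W y \<le> p 0 * (W x * exp x * exp (-1 * y))"
      using pY_pos[of 0] by (simp add: exp_diff exp_minus field_simps)
    then show "p y \<le> p x * exp x * exp (-1 * y)"
      by (subst (1 2) pY_eq_pY_0_Wf) (simp add: mult.assoc)
  qed
  then show ?thesis
    using FbarY_eq_tail_integral[OF \<open>0 \<le> x\<close>] set_borel_integral_eq_integral(2)[OF set_integrable_pY]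
    by simp
qed

lemma deriv_hf_sq_pY_le:
  assumes "0 \<le> x"
  shows "(deriv (hf \<alpha> \<gamma> \<sigma>) x)\<^sup>2 * p x
      \<le> (p 0 * exp ((2*\<bar>\<alpha>\<bar>*x0 + \<gamma>*x0\<^sup>2) / \<sigma>\<^sup>2) + p 0 ^ 3 * W x0) * exp x0 * exp (- x)"
    (is "_ \<le> (?A + ?B) * exp x0 * exp (- x)")
proof -
  define F where "F = FbarY \<alpha> \<gamma> \<sigma> x"
  have F: "0 \<le> F" "F \<le> 1" unfolding F_def using FbarY_nonneg[OF assms] FbarY_le_1 by auto
  have "(deriv (hf \<alpha> \<gamma> \<sigma>) x)\<^sup>2 * p x = (p 0 / p x * F)\<^sup>2 * p x"
    unfolding F_def using DERIV_imp_deriv[OF hf_has_derivative_FbarY[OF assms]] by simp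
  also have "\<dots> = p 0 * F\<^sup>2 / W x"
    using pY_pos[of x] pY_eq_pY_0_Wf[of x] Wf_pos[of \<alpha> \<gamma> \<sigma> x] by (simp add: power2_eq_square field_simps)
  also have "\<dots> \<le> (?A + ?B) * exp x0 * exp (- x)"
  proof (cases "x \<le> x0")
    case True
    have "p 0 * F\<^sup>2 / W x \<le> p 0 * (1 / W x)"
      using pY_pos[of 0] F Wf_pos[of \<alpha> \<gamma> \<sigma> x] by (simp add: power_le_one divide_right_mono)
    also have "\<dots> \<le> ?A"
      using inverse_Wf_le[OF assms True] pY_pos[of 0] by (intro mult_left_mono) auto
    also have "\<dots> \<le> ?A * (exp x0 * exp (- x))"
    proof -
      have "1 \<le> exp x0 * exp (- x)" using True by (simp add: exp_minus field_simps)
      then show ?thesis using pY_pos[of 0] mult_left_mono[of 1 _ ?A] by simp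
    qed
    also have "\<dots> \<le> (?A + ?B) * exp x0 * exp (- x)"
      using pY_pos[of 0] Wf_pos[of \<alpha> \<gamma> \<sigma> x0] by (simp add: distrib_right)
    finally show ?thesis .
  next
    case False
    have "F \<le> p 0 * W x" using FbarY_le_pY[of x] False pY_eq_pY_0_Wf[of x] unfolding F_def by simp
    then have "p 0 * F\<^sup>2 / W x \<le> p 0 * (p 0 * W x)\<^sup>2 / W x"
      using pY_pos[of 0] Wf_pos[of \<alpha> \<gamma> \<sigma> x] F by (intro divide_right_mono mult_left_mono power_mono) auto
    also have "\<dots> = p 0 ^ 3 * W x"
      using Wf_pos[of \<alpha> \<gamma> \<sigma> x] by (simp add: power2_eq_square power3_eq_cube)
    also have "\<dots> \<le> ?B * exp x0 * exp (- x)"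
      using Wf_le_exp_decay[of x0 x] False pY_pos[of 0] by (simp add: exp_diff exp_minus field_simps)
    also have "\<dots> \<le> (?A + ?B) * exp x0 * exp (- x)"
      using pY_pos[of 0] by (simp add: distrib_right)
    finally show ?thesis .
  qed
  finally show ?thesis .
qed

end

theorem lemma4:
  fixes \<alpha> \<gamma> \<sigma> :: real
  assumes "\<gamma> > 0" and "\<sigma> > 0"
  shows "(\<forall>x>0. (hf \<alpha> \<gamma> \<sigma> has_real_derivative
              (pY \<alpha> \<gamma> \<sigma> 0 / pY \<alpha> \<gamma> \<sigma> x * FbarY \<alpha> \<gamma> \<sigma> x)) (at x))
       \<and> (\<integral>\<^sup>+ x\<in>{0..}. ennreal ((deriv (hf \<alpha> \<gamma> \<sigma>) x)\<^sup>2 * pY \<alpha> \<gamma> \<sigma> x) \<partial>lborel) < \<infinity>"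
proof -
  interpret reflected_OU \<alpha> \<gamma> \<sigma> using assms by unfold_locales
  show ?thesis
  proof
    show "\<forall>x>0. (hf \<alpha> \<gamma> \<sigma> has_real_derivative p 0 / p x * FbarY \<alpha> \<gamma> \<sigma> x) (at x)"
      using hf_has_derivative_FbarY by simp
    show "(\<integral>\<^sup>+ x\<in>{0..}. ennreal ((deriv (hf \<alpha> \<gamma> \<sigma>) x)\<^sup>2 * p x) \<partial>lborel) < \<infinity>"
      using pY_pos[of 0] Wf_pos[of \<alpha> \<gamma> \<sigma> x0]
      by (intro nn_integral_atLeast_0_finite_if_exp_bounded[OF _ deriv_hf_sq_pY_le]) simp_all
  qed
qed

end
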